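(* Let $A\in\mathbb{R}^{n\times n}$, $B\in\mathbb{R}^{n\times k}$, $C\in\mathbb{R}^{m\times n}$, and let $\mathcal{V}^*(C)$ be the maximal $(A,B)$-invariant subspace contained in $\operatorname{Ker}C$. Suppose one of the following holds: (1) $n-m\ge k$, $\operatorname{Im}B\subseteq\operatorname{Ker}C$, and $CAv\neq0$ for every nonzero $v\in\operatorname{Ker}C$; (2) $n-m<k$, $\operatorname{Ker}C\subseteq\operatorname{Im}B$, and there is a matrix $Z$ with $ZB=0$ such that $ZAv\neq0$ for every nonzero $v\in\operatorname{Ker}C$. Then $\dim\mathcal{V}^*(C)=0$, and, in the asynchronous dynamic game described in the context, if the attacker's choice in an odd epoch $l$ is $C_l=C$, the game is in lock mode from epoch $l$ on (there is $\gamma$ with $\Phi_i=\gamma$ for all $i\ge l$).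
   Context: A subspace $\mathcal{V}$ is $(A,B)$-invariant if $(A+BF)\mathcal{V}\subseteq\mathcal{V}$ for some $F\in\mathbb{R}^{k\times n}$ (a friend of $\mathcal{V}$). For $C\in\mathbb{R}^{m\times n}$, $F\in\mathbb{R}^{k\times n}$ let $\Omega(C,F)=[C;\,C(A+BF);\,\dots;\,C(A+BF)^{n-1}]$. Best responses: $BR1_a(F)=\arg\min_{C}\dim\operatorname{Ker}\Omega(C,F)$; $BR1_d(C)=\arg\max_{F}\dim\operatorname{Ker}\Omega(C,F)$; $BR2_a(F)=\arg\min_{C\in BR1_a(F)}\dim\mathcal{V}^*(C)$; $BR2_d(C)=\arg\max_{F\in BR1_d(C)}\min_{C'}\dim\operatorname{Ker}\Omega(C',F)$. The game: an initial $F_0$ is given; in each odd epoch $i$ the attacker chooses $C_i\in BR2_a(F_{i-1})$ (keeping $C_i=C_{i-2}$ whenever $C_{i-2}\in BR2_a(F_{i-1})$), $F_i=F_{i-1}$, and $\Phi_i=\min_{C}\dim\operatorname{Ker}\Omega(C,F_{i-1})$; in each even epoch $i$ the defender chooses $F_i\in BR2_d(C_{i-1})$ (keeping $F_i=F_{i-2}$ whenever $F_{i-2}\in BR2_d(C_{i-1})$), $C_i=C_{i-1}$, and $\Phi_i=\max_{F}\dim\operatorname{Ker}\Omega(C_{i-1},F)$. *)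

theory Defs
  imports "HOL-Analysis.Analysis"
begin

text \<open>Matrices are HOL-Analysis matrices: an m x n real matrix is real^'n^'m,
  so A :: real^'n^'n, B :: real^'k^'n, C :: real^'n^'m, F :: real^'n^'k.\<close>

fun mpow :: "real^'n^'n \<Rightarrow> nat \<Rightarrow> real^'n^'n" where
  "mpow M 0 = mat 1"
| "mpow M (Suc j) = M ** mpow M j"

definition kerm :: "real^'n^'m \<Rightarrow> (real^'n) set" where
  "kerm M = {x. M *v x = 0}"

definition imm :: "real^'k^'n \<Rightarrow> (real^'n) set" where
  "imm M = range (\<lambda>u. M *v u)"

text \<open>Kernel of Omega(C,F) = [C; C(A+BF); ...; C(A+BF)^(n-1)] (stacked matrix):
  a vector is in the kernel iff every block annihilates it.\<close>
definition KerOmega :: "real^'n^'n \<Rightarrow> real^'k^'n \<Rightarrow> real^'n^'m \<Rightarrow> real^'n^'k \<Rightarrow> (real^'n) set" where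
  "KerOmega A B C F = {x. \<forall>j<CARD('n). (C ** mpow (A + B ** F) j) *v x = 0}"

definition dKO :: "real^'n^'n \<Rightarrow> real^'k^'n \<Rightarrow> real^'n^'m \<Rightarrow> real^'n^'k \<Rightarrow> nat" where
  "dKO A B C F = dim (KerOmega A B C F)"

definition ABinv :: "real^'n^'n \<Rightarrow> real^'k^'n \<Rightarrow> (real^'n) set \<Rightarrow> bool" where
  "ABinv A B V \<longleftrightarrow> subspace V \<and> (\<exists>F::real^'n^'k. \<forall>v\<in>V. (A + B ** F) *v v \<in> V)"

definition Vstar :: "real^'n^'n \<Rightarrow> real^'k^'n \<Rightarrow> real^'n^'m \<Rightarrow> (real^'n) set" where
  "Vstar A B C = (GREATEST V. ABinv A B V \<and> V \<subseteq> kerm C)"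

definition minKO :: "real^'n^'n \<Rightarrow> real^'k^'n \<Rightarrow> real^'n^'k \<Rightarrow> ('m::finite) itself \<Rightarrow> nat" where
  "minKO A B F _ = (INF C::real^'n^'m. dKO A B C F)"

definition maxKO :: "real^'n^'n \<Rightarrow> real^'k^'n \<Rightarrow> real^'n^'m \<Rightarrow> nat" where
  "maxKO A B C = (SUP F::real^'n^'k. dKO A B C F)"

definition BR1a :: "real^'n^'n \<Rightarrow> real^'k^'n \<Rightarrow> real^'n^'k \<Rightarrow> (real^'n^'m) set" where
  "BR1a A B F = {C. \<forall>C'::real^'n^'m. dKO A B C F \<le> dKO A B C' F}"

definition BR1d :: "real^'n^'n \<Rightarrow> real^'k^'n \<Rightarrow> real^'n^'m \<Rightarrow> (real^'n^'k) set" where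
  "BR1d A B C = {F. \<forall>F'. dKO A B C F' \<le> dKO A B C F}"

definition BR2a :: "real^'n^'n \<Rightarrow> real^'k^'n \<Rightarrow> real^'n^'k \<Rightarrow> (real^'n^'m) set" where
  "BR2a A B F = {C \<in> BR1a A B F. \<forall>C'::real^'n^'m\<in>BR1a A B F. dim (Vstar A B C) \<le> dim (Vstar A B C')}"

definition BR2d :: "real^'n^'n \<Rightarrow> real^'k^'n \<Rightarrow> real^'n^'m \<Rightarrow> (real^'n^'k) set" where
  "BR2d A B C = {F \<in> BR1d A B C.
      \<forall>F'\<in>BR1d A B C. minKO A B F' TYPE('m) \<le> minKO A B F TYPE('m)}"

text \<open>The asynchronous game, epochs i = 1,2,...; Fs 0 is the initial F_0.
  Cs i, Fs i, Phi i are C_i, F_i, Phi_i (Cs 0 is irrelevant).\<close>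
definition game :: "real^'n^'n \<Rightarrow> real^'k^'n \<Rightarrow> (nat \<Rightarrow> real^'n^'m) \<Rightarrow> (nat \<Rightarrow> real^'n^'k)
    \<Rightarrow> (nat \<Rightarrow> nat) \<Rightarrow> bool" where
  "game A B Cs Fs Phi \<longleftrightarrow>
     (\<forall>i. odd i \<longrightarrow>
        Cs i \<in> BR2a A B (Fs (i - 1))
      \<and> (i \<ge> 3 \<and> Cs (i - 2) \<in> BR2a A B (Fs (i - 1)) \<longrightarrow> Cs i = Cs (i - 2))
      \<and> Fs i = Fs (i - 1)
      \<and> Phi i = minKO A B (Fs (i - 1)) TYPE('m))
   \<and> (\<forall>i. even i \<and> i \<ge> 2 \<longrightarrow>
        Fs i \<in> BR2d A B (Cs (i - 1))
      \<and> (Fs (i - 2) \<in> BR2d A B (Cs (i - 1)) \<longrightarrow> Fs i = Fs (i - 2))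
      \<and> Cs i = Cs (i - 1)
      \<and> Phi i = maxKO A B (Cs (i - 1)))"

definition lock_mode_from :: "(nat \<Rightarrow> nat) \<Rightarrow> nat \<Rightarrow> bool" where
  "lock_mode_from Phi l \<longleftrightarrow> (\<exists>\<gamma>. \<forall>i\<ge>l. Phi i = \<gamma>)"

end

theory Submission
  imports Defs
begin

text \<open>Under either hypothesis, every closed loop \<open>A + B F\<close> pushes each nonzero vector of
  \<open>Ker C\<close> out of \<open>Ker C\<close>: in case (1) because the input term \<open>B F v\<close> stays in \<open>Ker C\<close>,
  in case (2) because \<open>Z\<close> annihilates it. Hence \<open>V*(C) = 0\<close> and \<open>\<Omega>(C,F)\<close> has trivial
  kernel for every \<open>F\<close>. So \<open>C\<close> is an attacker best response against every \<open>F\<close>, the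
  attacker never leaves it, and every later \<open>\<Phi>\<^sub>i\<close> is \<open>0\<close>.\<close>

definition escapes_kernel :: "real^'n^'n \<Rightarrow> real^'k^'n \<Rightarrow> real^'n^'m \<Rightarrow> bool" where
  "escapes_kernel A B C \<longleftrightarrow>
     (\<forall>F v. C *v v = 0 \<longrightarrow> C *v ((A + B ** F) *v v) = 0 \<longrightarrow> v = 0)"

lemma closed_loop_mult_vec: "(A + B ** F) *v v = A *v v + B *v (F *v v)"
  by (simp add: matrix_vector_mult_add_rdistrib matrix_vector_mul_assoc)

lemma escapes_kernel_if_input_in_kernel:
  assumes "imm B \<subseteq> kerm C" and "\<forall>v\<in>kerm C. v \<noteq> 0 \<longrightarrow> C *v (A *v v) \<noteq> 0"
  shows "escapes_kernel A B C"
  unfolding escapes_kernel_def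
proof (intro allI impI)
  fix F v
  assume Cv: "C *v v = 0" and CAFv: "C *v ((A + B ** F) *v v) = 0"
  have "B *v (F *v v) \<in> kerm C"
    using assms(1) unfolding imm_def by auto
  with CAFv have "C *v (A *v v) = 0"
    by (simp add: kerm_def closed_loop_mult_vec matrix_vector_right_distrib)
  with assms(2) Cv show "v = 0"
    unfolding kerm_def by auto
qed

lemma escapes_kernel_if_kernel_in_input:
  fixes Z :: "real^'n^'p"
  assumes "kerm C \<subseteq> imm B" and "Z ** B = 0"
    and "\<forall>v\<in>kerm C. v \<noteq> 0 \<longrightarrow> Z *v (A *v v) \<noteq> 0"
  shows "escapes_kernel A B C"
  unfolding escapes_kernel_def
proof (intro allI impI)
  fix F v
  assume Cv: "C *v v = 0" and CAFv: "C *v ((A + B ** F) *v v) = 0"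
  have ZB: "Z *v (B *v w) = 0" for w
    by (simp add: matrix_vector_mul_assoc assms(2))
  have "(A + B ** F) *v v \<in> imm B"
    using assms(1) CAFv unfolding kerm_def by auto
  then have "Z *v ((A + B ** F) *v v) = 0"
    unfolding imm_def using ZB by auto
  then have "Z *v (A *v v) = 0"
    by (simp add: closed_loop_mult_vec matrix_vector_right_distrib ZB)
  with assms(3) Cv show "v = 0"
    unfolding kerm_def by auto
qed

lemma Vstar_eq_zero_if_escapes_kernel:
  assumes "escapes_kernel A B C"
  shows "Vstar A B C = {0}"
  unfolding Vstar_def
proof (rule Greatest_equality)
  show "ABinv A B {0} \<and> {0} \<subseteq> kerm C"
    unfolding ABinv_def kerm_def by (auto simp: subspace_0)
next
  fix V
  assume "ABinv A B V \<and> V \<subseteq> kerm C"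
  then obtain F where "V \<subseteq> kerm C" and "\<forall>v\<in>V. (A + B ** F) *v v \<in> V"
    unfolding ABinv_def by blast
  with assms show "V \<le> {0}"
    unfolding escapes_kernel_def kerm_def by blast
qed

lemma vector_eq_scaleR_if_CARD_1:
  fixes v w :: "real^'n"
  assumes "CARD('n) = 1" and "v \<noteq> 0"
  shows "\<exists>c. w = c *\<^sub>R v"
proof -
  obtain a :: 'n where UNIV_eq: "UNIV = {a}"
    using assms(1) card_1_singletonE by blast
  have va: "v $ a \<noteq> 0"
    using assms(2) UNIV_eq by (auto simp: vec_eq_iff)
  have "w = (w $ a / v $ a) *\<^sub>R v"
    unfolding vec_eq_iff
  proof
    fix i
    have "i = a"
      using UNIV_eq by blast
    then show "w $ i = ((w $ a / v $ a) *\<^sub>R v) $ i"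
      using va by simp
  qed
  then show ?thesis ..
qed

lemma KerOmega_eq_zero_if_escapes_kernel:
  fixes A :: "real^'n^'n" and B :: "real^'k^'n" and C :: "real^'n^'m"
  assumes "escapes_kernel A B C"
  shows "KerOmega A B C F = {0}"
proof -
  have "v = 0" if v: "v \<in> KerOmega A B C F" for v
  proof -
    have CARD_pos: "0 < CARD('n)"
      by (rule finite_UNIV_card_ge_0) simp
    have blocks: "(C ** mpow (A + B ** F) j) *v v = 0" if "j < CARD('n)" for j
      using v that unfolding KerOmega_def by blast
    have Cv: "C *v v = 0"
      using blocks[OF CARD_pos] by simp
    have "C *v ((A + B ** F) *v v) = 0"
    proof (cases "CARD('n) = 1")
      case True
      \<comment> \<open>Here \<open>\<Omega>(C,F) = C\<close>, but every vector is an eigenvector of \<open>A + B F\<close>.\<close>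
      show ?thesis
      proof (cases "v = 0")
        case False
        then obtain c where "(A + B ** F) *v v = c *\<^sub>R v"
          using vector_eq_scaleR_if_CARD_1[OF True] by blast
        then show ?thesis
          using Cv by (simp add: matrix_vector_mult_scaleR)
      qed simp
    next
      case False
      with CARD_pos have "1 < CARD('n)"
        by linarith
      then show ?thesis
        using blocks[of 1] by (simp add: matrix_vector_mul_assoc)
    qed
    with assms Cv show "v = 0"
      unfolding escapes_kernel_def by blast
  qed
  then show ?thesis
    unfolding KerOmega_def by auto
qed

lemma dKO_eq_zero_if_escapes_kernel:
  "escapes_kernel A B C \<Longrightarrow> dKO A B C F = 0"
  by (simp add: dKO_def KerOmega_eq_zero_if_escapes_kernel)

lemma minKO_le_dKO:
  fixes C :: "real^'n^'m"
  shows "minKO A B F TYPE('m) \<le> dKO A B C F"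
  unfolding minKO_def by (rule cINF_lower) simp_all

lemma in_BR2a_if_escapes_kernel:
  assumes "escapes_kernel A B C"
  shows "C \<in> BR2a A B F"
  using assms
  by (simp add: BR2a_def BR1a_def dKO_eq_zero_if_escapes_kernel Vstar_eq_zero_if_escapes_kernel)

lemma game_attacker_keeps_dominant:
  fixes Cs :: "nat \<Rightarrow> real^'n^'m" and Fs :: "nat \<Rightarrow> real^'n^'k"
  assumes "game A B Cs Fs Phi" and "odd l" and "Cs l = C"
    and dominant: "\<And>F. C \<in> BR2a A B F"
  shows "Cs (l + 2 * d) = C"
proof (induction d)
  case 0
  then show ?case using assms(3) by simp
next
  case (Suc d)
  let ?i = "l + 2 * Suc d"
  have "odd ?i" and "?i \<ge> 3" and prev: "?i - 2 = l + 2 * d"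
    using assms(2) by (auto elim: oddE)
  moreover have "Cs (?i - 2) \<in> BR2a A B (Fs (?i - 1))"
    unfolding prev Suc.IH by (rule dominant)
  ultimately show ?case
    using assms(1) Suc.IH unfolding game_def by metis
qed

lemma game_lock_mode_from_if_dominant:
  fixes Cs :: "nat \<Rightarrow> real^'n^'m" and Fs :: "nat \<Rightarrow> real^'n^'k"
  assumes game: "game A B Cs Fs Phi" and "odd l" and "Cs l = C"
    and "\<And>F. C \<in> BR2a A B F"
    and minKO_const: "\<And>F. minKO A B F TYPE('m) = \<gamma>" and "maxKO A B C = \<gamma>"
  shows "lock_mode_from Phi l"
  unfolding lock_mode_from_def
proof (intro exI allI impI)
  fix i
  assume "l \<le> i"
  show "Phi i = \<gamma>"
  proof (cases "odd i")
    case True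
    then show ?thesis
      using game minKO_const unfolding game_def by metis
  next
    case False
    obtain q where i: "i = 2 * q"
      using False by blast
    obtain j where l: "l = 2 * j + 1"
      using \<open>odd l\<close> by (blast elim: oddE)
    have "i \<ge> 2" and "i - 1 = l + 2 * (q - j - 1)"
      using \<open>l \<le> i\<close> i l by auto
    then have "Cs (i - 1) = C"
      using game_attacker_keeps_dominant assms(1-4) by metis
    with game False \<open>i \<ge> 2\<close> \<open>maxKO A B C = \<gamma>\<close> show ?thesis
      unfolding game_def by metis
  qed
qed

theorem theorem2:
  fixes A :: "real^'n^'n" and B :: "real^'k^'n" and C :: "real^'n^'m"
  assumes "(CARD('m) + CARD('k) \<le> CARD('n)
             \<and> imm B \<subseteq> kerm C
             \<and> (\<forall>v\<in>kerm C. v \<noteq> 0 \<longrightarrow> C *v (A *v v) \<noteq> 0))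
         \<or> (CARD('n) < CARD('m) + CARD('k)
             \<and> kerm C \<subseteq> imm B
             \<and> (\<exists>Z::real^'n^'p. Z ** B = 0 \<and> (\<forall>v\<in>kerm C. v \<noteq> 0 \<longrightarrow> Z *v (A *v v) \<noteq> 0)))"
  shows "dim (Vstar A B C) = 0
       \<and> (\<forall>(Cs :: nat \<Rightarrow> real^'n^'m) (Fs :: nat \<Rightarrow> real^'n^'k) Phi l.
            game A B Cs Fs Phi \<and> odd l \<and> Cs l = C \<longrightarrow> lock_mode_from Phi l)"
proof -
  have escapes: "escapes_kernel A B C"
    using assms escapes_kernel_if_input_in_kernel escapes_kernel_if_kernel_in_input by blast
  have minKO_zero: "minKO A B F TYPE('m) = 0" for F :: "real^'n^'k"
    using minKO_le_dKO[of A B F C] dKO_eq_zero_if_escapes_kernel[OF escapes] by simp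
  have maxKO_zero: "maxKO A B C = 0"
    by (simp add: maxKO_def dKO_eq_zero_if_escapes_kernel[OF escapes])
  show ?thesis
    using Vstar_eq_zero_if_escapes_kernel[OF escapes]
      game_lock_mode_from_if_dominant[OF _ _ _ in_BR2a_if_escapes_kernel[OF escapes]
        minKO_zero maxKO_zero]
    by auto
qed

end
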